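(* Let $K$ be as in the context and let $F=a_1x_1^4+\cdots+a_{11}x_{11}^4$ with all $a_i\in K\setminus\{0\}$. If $F$ is of type $(5,0,3,0)$, then $F$ has a nontrivial zero in $K^{11}$.
   Context: $K$ is one of $\mathbb{Q}_2(\sqrt2),\mathbb{Q}_2(\sqrt{10}),\mathbb{Q}_2(\sqrt{-2}),\mathbb{Q}_2(\sqrt{-10})$, with uniformizer $\pi$ and valuation $v_\pi$. The level of the variable $x_i$ is $v_\pi(a_i)$, considered modulo $4$. For nonnegative integers $s_0,s_1,s_2,s_3$, the form is said to be of type $(s_0,s_1,s_2,s_3)$ if there exists $j\in\mathbb{Z}/4$ such that for each $i\in\{0,1,2,3\}$ the number of variables whose level is congruent to $i+j$ modulo $4$ is at least $s_i$ (so types differing by a cyclic permutation of the entries are the same type). *)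

theory Defs
  imports Main
begin

text \<open>A normalized discrete valuation on a field (values only meaningful on nonzero
elements): multiplicative, ultrametric, with an element of valuation 1 (a uniformizer).\<close>
definition normalized_discrete_valuation :: "('a::field \<Rightarrow> int) \<Rightarrow> bool" where
  "normalized_discrete_valuation v \<longleftrightarrow>
     (\<forall>x y. x \<noteq> 0 \<and> y \<noteq> 0 \<longrightarrow> v (x * y) = v x + v y) \<and>
     (\<forall>x y. x \<noteq> 0 \<and> y \<noteq> 0 \<and> x + y \<noteq> 0 \<longrightarrow> v (x + y) \<ge> min (v x) (v y)) \<and>
     (\<exists>p. p \<noteq> 0 \<and> v p = 1)"

definition val_cauchy :: "('a::field \<Rightarrow> int) \<Rightarrow> (nat \<Rightarrow> 'a) \<Rightarrow> bool" where
  "val_cauchy v s \<longleftrightarrow>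
     (\<forall>M. \<exists>N. \<forall>m\<ge>N. \<forall>n\<ge>N. s m \<noteq> s n \<longrightarrow> v (s m - s n) \<ge> M)"

definition val_converges_to :: "('a::field \<Rightarrow> int) \<Rightarrow> (nat \<Rightarrow> 'a) \<Rightarrow> 'a \<Rightarrow> bool" where
  "val_converges_to v s L \<longleftrightarrow>
     (\<forall>M. \<exists>N. \<forall>n\<ge>N. s n \<noteq> L \<longrightarrow> v (s n - L) \<ge> M)"

definition val_complete :: "('a::field \<Rightarrow> int) \<Rightarrow> bool" where
  "val_complete v \<longleftrightarrow> (\<forall>s. val_cauchy v s \<longrightarrow> (\<exists>L. val_converges_to v s L))"

text \<open>K together with its normalized valuation v is (isomorphic to) one of
  Q_2(sqrt 2), Q_2(sqrt 10), Q_2(sqrt(-2)), Q_2(sqrt(-10)):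
  a complete discretely valued field whose residue field is F_2
  (every unit is congruent to 1), with v(2) = 2 (ramification index 2 over Q_2),
  containing a square root of d for some d in {2,10,-2,-10}.
  These conditions force K to be a quadratic totally ramified extension of Q_2,
  hence K = Q_2(sqrt d).\<close>
definition is_Q2_sqrt_field :: "('a::field \<Rightarrow> int) \<Rightarrow> bool" where
  "is_Q2_sqrt_field v \<longleftrightarrow>
     normalized_discrete_valuation v \<and> val_complete v \<and>
     (\<forall>x. x \<noteq> 0 \<and> v x = 0 \<longrightarrow> x = 1 \<or> v (x - 1) > 0) \<and>
     (2::'a) \<noteq> 0 \<and> v 2 = 2 \<and>
     (\<exists>d::int. d \<in> {2, 10, -2, -10} \<and> (\<exists>s::'a. s ^ 2 = of_int d))"

definition level :: "('a::field \<Rightarrow> int) \<Rightarrow> 'a \<Rightarrow> int" where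
  "level v c = v c mod 4"

definition form_of_type ::
  "('a::field \<Rightarrow> int) \<Rightarrow> nat \<Rightarrow> (nat \<Rightarrow> 'a) \<Rightarrow> (nat \<Rightarrow> nat) \<Rightarrow> bool" where
  "form_of_type v n a s \<longleftrightarrow>
     (\<exists>j::int. \<forall>i<4. card {k. k < n \<and> level v (a k) = (int i + j) mod 4} \<ge> s i)"

end

(*
  Rescaling variables by powers of a uniformizer s (with s^2 = d) and the whole form by a power of s,
  five coefficients become units and two get valuation 2. Since the residue field is F_2 and s^2 = d
  is an integer, every integral element is A + B s modulo s^4 with A, B integers, and units have A
  odd. A parity argument on these digits selects two or four of the units, together with possibly
  one valuation-2 coefficient, whose sum vanishes modulo s^4. The digits at s^4, s^5 and s^6 are then
  cleared one at a time: by setting an unused unit variable to s, by changing a used unit variable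
  from 1 to 1 + s (as v((1 + s)^4 - 1) = 5), and by setting the other valuation-2 variable to s. At
  the resulting point the form is divisible by s^7 while one term is a unit, and since elements
  congruent to 1 modulo s^7 are fourth powers (two Newton square roots, each losing v 2 = 2), that
  variable can be corrected to an exact zero.
*)
theory Submission
  imports Defs
begin

section \<open>Diagonal quartic forms\<close>

definition diag_quartic :: "('i \<Rightarrow> 'a::comm_ring_1) \<Rightarrow> 'i set \<Rightarrow> ('i \<Rightarrow> 'a) \<Rightarrow> 'a" where
  "diag_quartic c I x = (\<Sum>i\<in>I. c i * x i ^ 4)"

definition quartic_isotropic :: "('i \<Rightarrow> 'a::comm_ring_1) \<Rightarrow> 'i set \<Rightarrow> bool" where
  "quartic_isotropic c I \<longleftrightarrow> (\<exists>x. (\<exists>i\<in>I. x i \<noteq> 0) \<and> diag_quartic c I x = 0)"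

lemma diag_quartic_update:
  assumes "finite I" and "j \<in> I"
  shows "diag_quartic c I (x(j := y)) = diag_quartic c I x + c j * (y ^ 4 - x j ^ 4)"
proof -
  have "(\<Sum>i\<in>I - {j}. c i * (x(j := y)) i ^ 4) = (\<Sum>i\<in>I - {j}. c i * x i ^ 4)"
    by (rule sum.cong) auto
  then show ?thesis
    using assms unfolding diag_quartic_def by (simp add: sum.remove algebra_simps)
qed

lemma quartic_isotropic_subset:
  assumes "quartic_isotropic c I" and "I \<subseteq> J" and "finite J"
  shows "quartic_isotropic c J"
proof -
  obtain x where x: "\<exists>i\<in>I. x i \<noteq> 0" "diag_quartic c I x = 0"
    using assms(1) unfolding quartic_isotropic_def by blast
  define x' where "x' i = (if i \<in> I then x i else 0)" for i
  have "diag_quartic c J x' = diag_quartic c I x"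
    unfolding diag_quartic_def by (rule sum.mono_neutral_cong_right) (use assms in \<open>auto simp: x'_def\<close>)
  moreover have "\<exists>i\<in>J. x' i \<noteq> 0"
    using x(1) assms(2) by (auto simp: x'_def)
  ultimately show ?thesis
    unfolding quartic_isotropic_def using x(2) by auto
qed

lemma quartic_isotropic_rescale:
  fixes c :: "'i \<Rightarrow> 'a::field"
  assumes "\<mu> \<noteq> 0" and "\<forall>i\<in>I. \<rho> i \<noteq> 0" and "quartic_isotropic (\<lambda>i. \<mu> * \<rho> i ^ 4 * c i) I"
  shows "quartic_isotropic c I"
proof -
  obtain x where x: "\<exists>i\<in>I. x i \<noteq> 0" "diag_quartic (\<lambda>i. \<mu> * \<rho> i ^ 4 * c i) I x = 0"
    using assms(3) unfolding quartic_isotropic_def by blast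
  have "\<mu> * diag_quartic c I (\<lambda>i. \<rho> i * x i) = diag_quartic (\<lambda>i. \<mu> * \<rho> i ^ 4 * c i) I x"
    unfolding diag_quartic_def sum_distrib_left by (simp add: power_mult_distrib mult_ac)
  then have "diag_quartic c I (\<lambda>i. \<rho> i * x i) = 0"
    using x(2) assms(1) by simp
  moreover have "\<exists>i\<in>I. \<rho> i * x i \<noteq> 0"
    using x(1) assms(2) by auto
  ultimately show ?thesis
    unfolding quartic_isotropic_def by (intro exI[of _ "\<lambda>i. \<rho> i * x i"]) simp
qed

lemma form_of_type_mono:
  "form_of_type v n a t' \<Longrightarrow> (\<And>i. i < 4 \<Longrightarrow> t i \<le> t' i) \<Longrightarrow> form_of_type v n a t"
  unfolding form_of_type_def by (meson order_trans)

section \<open>Subset sums of integers modulo 4\<close>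

lemma exists_pair_even_sum:
  fixes c :: "'i \<Rightarrow> int"
  assumes "finite I" and "3 \<le> card I"
  shows "\<exists>i\<in>I. \<exists>j\<in>I. i \<noteq> j \<and> even (c i + c j)"
proof -
  obtain J where "J \<subseteq> I" "card J = 3"
    using obtain_subset_with_card_n[OF assms(2)] by blast
  then obtain x y z where "{x, y, z} \<subseteq> I" "x \<noteq> y" "y \<noteq> z" "x \<noteq> z"
    by (auto simp: card_3_iff)
  then show ?thesis
    by (cases "even (c x)"; cases "even (c y)"; cases "even (c z)") auto
qed

text \<open>Two disjoint pairs with even sums: if neither sum is \<open>0\<close> mod \<open>4\<close>, both are \<open>2\<close> mod \<open>4\<close>.\<close>
lemma exists_subset_sum_dvd_four:
  fixes c :: "'i \<Rightarrow> int"
  assumes "finite I" and "card I = 5"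
  shows "\<exists>T\<subseteq>I. (card T = 2 \<or> card T = 4) \<and> 4 dvd (\<Sum>i\<in>T. c i)"
proof -
  obtain i j where ij: "i \<in> I" "j \<in> I" "i \<noteq> j" "even (c i + c j)"
    using exists_pair_even_sum[of I c] assms by auto
  have "card (I - {i, j}) = 3"
    using assms ij by simp
  then obtain k l where kl: "k \<in> I - {i, j}" "l \<in> I - {i, j}" "k \<noteq> l" "even (c k + c l)"
    using exists_pair_even_sum[of "I - {i, j}" c] assms(1) by auto
  have "4 dvd c i + c j \<or> 4 dvd c k + c l \<or> 4 dvd (c i + c j) + (c k + c l)"
    using ij(4) kl(4) by presburger
  then consider "4 dvd c i + c j" | "4 dvd c k + c l" | "4 dvd (c i + c j) + (c k + c l)"
    by blast
  then show ?thesis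
  proof cases
    case 1
    then show ?thesis
      using ij by (intro exI[of _ "{i, j}"]) auto
  next
    case 2
    then show ?thesis
      using kl by (intro exI[of _ "{k, l}"]) auto
  next
    case 3
    then show ?thesis
      using ij kl by (intro exI[of _ "{i, j, k, l}"]) (auto simp: algebra_simps)
  qed
qed

text \<open>With \<open>e \<in> {0, 1}\<close> chosen so that \<open>B j \<equiv> e A j (mod 4)\<close>, it suffices to make both
  \<open>\<Sum> A\<close> and \<open>\<Sum> (B - e A)\<close> divisible by \<open>4\<close>. The first sum over \<open>T \<inter> I\<close> is even because
  \<open>T \<inter> I\<close> has an even number of elements; adding \<open>j\<close> or not fixes it modulo \<open>4\<close>.\<close>
lemma exists_subset_two_sums_dvd_four:
  fixes A B :: "'i \<Rightarrow> int"
  assumes "finite I" and "card I = 5" and "j \<notin> I"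
    and odd: "\<forall>i\<in>I. odd (A i)" and Aj: "A j mod 4 = 2" and Bj: "even (B j)"
  shows "\<exists>T\<subseteq>insert j I. (card (T \<inter> I) = 2 \<or> card (T \<inter> I) = 4) \<and>
           4 dvd (\<Sum>i\<in>T. A i) \<and> 4 dvd (\<Sum>i\<in>T. B i)"
proof -
  define e :: int where "e = (if 4 dvd B j then 0 else 1)"
  have j_term: "4 dvd B j - e * A j"
    using Aj Bj unfolding e_def by presburger
  obtain T0 where T0: "T0 \<subseteq> I" "card T0 = 2 \<or> card T0 = 4" "4 dvd (\<Sum>i\<in>T0. B i - e * A i)"
    using exists_subset_sum_dvd_four[OF assms(1,2)] by blast
  have "finite T0" and "j \<notin> T0"
    using T0(1) assms(1,3) finite_subset by auto
  have "even (\<Sum>i\<in>T0. A i - 1)"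
    using odd T0(1) by (intro dvd_sum) auto
  then have "even (\<Sum>i\<in>T0. A i)"
    using T0(2) by (auto simp: sum_subtractf)
  define T where "T = (if 4 dvd (\<Sum>i\<in>T0. A i) then T0 else insert j T0)"
  have "4 dvd (\<Sum>i\<in>T. A i)"
  proof (cases "4 dvd (\<Sum>i\<in>T0. A i)")
    case False
    then have "(\<Sum>i\<in>T. A i) = A j + (\<Sum>i\<in>T0. A i)"
      using \<open>finite T0\<close> \<open>j \<notin> T0\<close> unfolding T_def by simp
    then show ?thesis
      using False \<open>even (\<Sum>i\<in>T0. A i)\<close> Aj by presburger
  qed (simp add: T_def)
  moreover have "4 dvd (\<Sum>i\<in>T. B i - e * A i)"
    using T0(3) j_term \<open>finite T0\<close> \<open>j \<notin> T0\<close> unfolding T_def by simp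
  moreover have "(\<Sum>i\<in>T. B i) = (\<Sum>i\<in>T. B i - e * A i) + e * (\<Sum>i\<in>T. A i)"
    by (simp add: sum_subtractf sum_distrib_left)
  ultimately have "4 dvd (\<Sum>i\<in>T. B i)"
    by simp
  moreover have "T \<subseteq> insert j I" and "T \<inter> I = T0"
    using T0(1) assms(3) unfolding T_def by auto
  ultimately show ?thesis
    using T0(2) \<open>4 dvd (\<Sum>i\<in>T. A i)\<close> by blast
qed

section \<open>Discretely valued fields\<close>

locale discrete_valuation =
  fixes v :: "'a::field \<Rightarrow> int"
  assumes normalized: "normalized_discrete_valuation v"
begin

lemma val_mult: "x \<noteq> 0 \<Longrightarrow> y \<noteq> 0 \<Longrightarrow> v (x * y) = v x + v y"
  using normalized unfolding normalized_discrete_valuation_def by blast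

lemma val_add_ge_min: "x \<noteq> 0 \<Longrightarrow> y \<noteq> 0 \<Longrightarrow> x + y \<noteq> 0 \<Longrightarrow> min (v x) (v y) \<le> v (x + y)"
  using normalized unfolding normalized_discrete_valuation_def by blast

lemma val_one [simp]: "v 1 = 0"
  using val_mult[of 1 1] by simp

lemma val_uminus [simp]: "v (- x) = v x"
proof (cases "x = 0")
  case False
  have "v (-1) = 0"
    using val_mult[of "-1" "-1"] by simp
  then show ?thesis
    using val_mult[of "-1" x] False by simp
qed simp

lemma val_inverse: "x \<noteq> 0 \<Longrightarrow> v (inverse x) = - v x"
  using val_mult[of x "inverse x"] by simp

lemma val_divide: "x \<noteq> 0 \<Longrightarrow> y \<noteq> 0 \<Longrightarrow> v (x / y) = v x - v y"
  by (simp add: divide_inverse val_mult val_inverse)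

lemma val_power: "x \<noteq> 0 \<Longrightarrow> v (x ^ n) = int n * v x"
  by (induction n) (simp_all add: val_mult algebra_simps)

lemma val_power_int: "x \<noteq> 0 \<Longrightarrow> v (x powi m) = m * v x"
  by (cases "m \<ge> 0") (simp_all add: power_int_def val_power val_inverse)

lemma val_add_eq_left:
  assumes "x \<noteq> 0" and "y = 0 \<or> v x < v y"
  shows "x + y \<noteq> 0" and "v (x + y) = v x"
proof -
  show nz: "x + y \<noteq> 0"
  proof
    assume "x + y = 0"
    then have "y = - x"
      by (simp add: add_eq_0_iff)
    then show False
      using assms by simp
  qed
  show "v (x + y) = v x"
  proof (cases "y = 0")
    case False
    have "min (v (x + y)) (v (- y)) \<le> v x"
      using val_add_ge_min[of "x + y" "- y"] nz assms(1) False by simp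
    moreover have "min (v x) (v y) \<le> v (x + y)"
      using val_add_ge_min[of x y] nz assms(1) False by simp
    ultimately show ?thesis
      using assms(2) False by simp
  qed simp
qed

lemma exists_val_eq: "\<exists>x. x \<noteq> 0 \<and> v x = n"
proof -
  obtain p where "p \<noteq> 0" and "v p = 1"
    using normalized unfolding normalized_discrete_valuation_def by blast
  then show ?thesis
    by (intro exI[of _ "p powi n"]) (simp add: val_power_int)
qed

lemma exists_val_power_times_eq:
  assumes "c \<noteq> 0" and "n mod int m = v c mod int m"
  shows "\<exists>r. r \<noteq> 0 \<and> v (r ^ m * c) = n"
proof -
  obtain r where "r \<noteq> 0" and r: "v r = (n - v c) div int m"
    using exists_val_eq by blast
  moreover have "int m * ((n - v c) div int m) = n - v c"
    using assms(2) by (simp add: mod_eq_dvd_iff)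
  ultimately show ?thesis
    using assms(1) by (intro exI[of _ r]) (simp add: val_mult val_power)
qed

text \<open>\<open>val_ge n x\<close> says \<open>x \<equiv> 0\<close> modulo the \<open>n\<close>-th power of the maximal ideal; \<open>0\<close> is included
  explicitly because \<open>v 0\<close> is an arbitrary integer.\<close>
definition val_ge :: "int \<Rightarrow> 'a \<Rightarrow> bool" where
  "val_ge n x \<longleftrightarrow> x = 0 \<or> n \<le> v x"

lemma val_ge_0 [simp]: "val_ge n 0"
  by (simp add: val_ge_def)

lemma val_ge_iff: "x \<noteq> 0 \<Longrightarrow> val_ge n x \<longleftrightarrow> n \<le> v x"
  by (simp add: val_ge_def)

lemma val_ge_mono: "m \<le> n \<Longrightarrow> val_ge n x \<Longrightarrow> val_ge m x"
  by (auto simp: val_ge_def)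

lemma val_ge_add: "val_ge n x \<Longrightarrow> val_ge n y \<Longrightarrow> val_ge n (x + y)"
  unfolding val_ge_def using val_add_ge_min[of x y] by fastforce

lemma val_ge_uminus [simp]: "val_ge n (- x) \<longleftrightarrow> val_ge n x"
  by (simp add: val_ge_def)

lemma val_ge_diff: "val_ge n x \<Longrightarrow> val_ge n y \<Longrightarrow> val_ge n (x - y)"
  using val_ge_add[of n x "- y"] by simp

lemma val_ge_mult: "val_ge m x \<Longrightarrow> val_ge n y \<Longrightarrow> val_ge (m + n) (x * y)"
  by (cases "x = 0 \<or> y = 0") (auto simp: val_ge_def val_mult)

lemma val_ge_sum: "(\<And>i. i \<in> I \<Longrightarrow> val_ge n (f i)) \<Longrightarrow> val_ge n (\<Sum>i\<in>I. f i)"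
  by (induction I rule: infinite_finite_induct) (auto intro: val_ge_add)

lemma val_ge_of_int: "val_ge 0 (of_int k)"
proof -
  have "val_ge 0 (of_nat n)" for n
    by (induction n) (auto simp: val_ge_iff intro: val_ge_add)
  from this[of "nat k"] this[of "nat (- k)"] show ?thesis
    by (cases "k \<ge> 0") simp_all
qed

lemma val_ge_all_imp_zero: "(\<And>n. val_ge n x) \<Longrightarrow> x = 0"
  using val_ge_def[of "v x + 1" x] by force

end

section \<open>Fourth roots in complete fields with \<open>v 2 = 2\<close>\<close>

locale complete_dyadic_valuation = discrete_valuation +
  assumes complete: "val_complete v"
    and two_nonzero: "(2::'a) \<noteq> 0"
    and val_two: "v 2 = 2"
begin

lemma val_ge_of_int_dvd: "2 ^ n dvd k \<Longrightarrow> val_ge (2 * int n) (of_int k)"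
proof -
  assume "2 ^ n dvd k"
  then obtain m where "k = 2 ^ n * m" ..
  then have "of_int k = (2::'a) ^ n * of_int m"
    by simp
  moreover have "val_ge (2 * int n) ((2::'a) ^ n)"
    using two_nonzero by (simp add: val_ge_iff val_power val_two)
  ultimately show ?thesis
    using val_ge_mult[OF _ val_ge_of_int] by fastforce
qed

lemma odd_imp_val_zero:
  assumes "odd k"
  shows "of_int k \<noteq> (0::'a)" and "v (of_int k) = 0"
proof -
  have "val_ge 2 (of_int (k - 1) :: 'a)"
    using val_ge_of_int_dvd[of 1 "k - 1"] assms by simp
  then have "of_int (k - 1) = (0::'a) \<or> v 1 < v (of_int (k - 1) :: 'a)"
    by (auto simp: val_ge_def)
  then show "of_int k \<noteq> (0::'a)" and "v (of_int k) = 0"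
    using val_add_eq_left[of 1 "of_int (k - 1)"] by simp_all
qed

lemma val_of_int_two_power_times_odd:
  assumes "odd m"
  shows "of_int (2 ^ n * m) \<noteq> (0::'a)" and "v (of_int (2 ^ n * m) :: 'a) = 2 * int n"
  using odd_imp_val_zero[OF assms] two_nonzero by (simp_all add: val_mult val_power val_two)

lemma val_ge_divide_two: "val_ge (n + 2) x \<Longrightarrow> val_ge n (x / 2)"
  by (cases "x = 0") (simp_all add: val_ge_iff val_divide two_nonzero val_two)

lemma val_cauchy_if_val_ge_steps:
  assumes "\<And>n. val_ge (int n) (f (Suc n) - f n)"
  shows "val_cauchy v f"
proof -
  have tail: "val_ge (int N) (f m - f N)" if "N \<le> m" for N m
    using that
  proof (induction m rule: dec_induct)
    case (step m)
    have "val_ge (int N) (f (Suc m) - f m)"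
      using val_ge_mono[OF _ assms[of m]] step.hyps(1) by simp
    from val_ge_add[OF this step.IH] show ?case
      by simp
  qed simp
  show ?thesis
    unfolding val_cauchy_def
  proof (intro allI exI[of _ "nat M" for M] impI ballI)
    fix M :: int and m n
    assume "nat M \<le> m" "nat M \<le> n" and ne: "f m \<noteq> f n"
    then have "val_ge (int (nat M)) ((f m - f (nat M)) - (f n - f (nat M)))"
      using tail val_ge_diff by blast
    then show "M \<le> v (f m - f n)"
      using ne by (simp add: val_ge_iff split: if_splits)
  qed
qed

lemma val_converges_imp_val_ge:
  "val_converges_to v f L \<Longrightarrow> \<exists>N. \<forall>n\<ge>N. val_ge M (f n - L)"
  unfolding val_converges_to_def val_ge_def by (metis right_minus_eq)

text \<open>Newton's iteration for \<open>(1 + t)\<^sup>2 = 1 + z\<close>, written as \<open>t = (z - t\<^sup>2) / 2\<close>: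
  the division by \<open>2\<close> costs two units of valuation, the squaring gains \<open>k - 2 \<ge> 3\<close>.\<close>
definition sqrt_one_plus_iter :: "'a \<Rightarrow> nat \<Rightarrow> 'a" where
  "sqrt_one_plus_iter z n = ((\<lambda>t. (z - t\<^sup>2) / 2) ^^ n) 0"

lemma sqrt_one_plus_iter_0: "sqrt_one_plus_iter z 0 = 0"
  and sqrt_one_plus_iter_Suc: "sqrt_one_plus_iter z (Suc n) = (z - (sqrt_one_plus_iter z n)\<^sup>2) / 2"
  by (simp_all add: sqrt_one_plus_iter_def)

lemma val_ge_sqrt_one_plus_iter:
  assumes k: "5 \<le> k" and z: "val_ge k z"
  shows "val_ge (k - 2) (sqrt_one_plus_iter z n)"
proof (induction n)
  case (Suc n)
  have "val_ge (k - 2 + (k - 2)) ((sqrt_one_plus_iter z n)\<^sup>2)"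
    using val_ge_mult[OF Suc Suc] by (simp add: power2_eq_square)
  then have "val_ge k ((sqrt_one_plus_iter z n)\<^sup>2)"
    by (rule val_ge_mono[rotated]) (use k in simp)
  from val_ge_diff[OF z this] have "val_ge (k - 2 + 2) (z - (sqrt_one_plus_iter z n)\<^sup>2)"
    by simp
  then show ?case
    unfolding sqrt_one_plus_iter_Suc by (rule val_ge_divide_two)
qed (simp add: sqrt_one_plus_iter_0)

lemma val_ge_sqrt_one_plus_iter_step:
  assumes k: "5 \<le> k" and z: "val_ge k z"
  shows "val_ge (int n + (k - 2)) (sqrt_one_plus_iter z (Suc n) - sqrt_one_plus_iter z n)"
proof (induction n)
  case 0
  show ?case
    using z val_ge_divide_two[of "k - 2" z] by (simp add: sqrt_one_plus_iter_Suc sqrt_one_plus_iter_0)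
next
  case (Suc n)
  let ?t = "sqrt_one_plus_iter z"
  have "?t (Suc (Suc n)) - ?t (Suc n) = (z - (?t (Suc n))\<^sup>2) / 2 - (z - (?t n)\<^sup>2) / 2"
    by (simp only: sqrt_one_plus_iter_Suc)
  also have "\<dots> = - ((?t (Suc n) - ?t n) * (?t (Suc n) + ?t n)) / 2"
    by (simp only: diff_divide_distrib[symmetric]) (simp add: power2_eq_square algebra_simps)
  finally have diff: "?t (Suc (Suc n)) - ?t (Suc n) = - ((?t (Suc n) - ?t n) * (?t (Suc n) + ?t n)) / 2" .
  have "val_ge (int n + (k - 2) + (k - 2)) ((?t (Suc n) - ?t n) * (?t (Suc n) + ?t n))"
    using val_ge_mult[OF Suc val_ge_add[OF val_ge_sqrt_one_plus_iter[OF k z] val_ge_sqrt_one_plus_iter[OF k z]]] .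
  then have "val_ge (int (Suc n) + (k - 2) + 2) ((?t (Suc n) - ?t n) * (?t (Suc n) + ?t n))"
    by (rule val_ge_mono[rotated]) (use k in simp)
  then show ?case
    unfolding diff using val_ge_divide_two by simp
qed

lemma sqrt_one_plus:
  assumes k: "5 \<le> k" and z: "val_ge k z"
  shows "\<exists>w. w\<^sup>2 = 1 + z \<and> val_ge (k - 2) (w - 1)"
proof -
  let ?t = "sqrt_one_plus_iter z"
  have "val_cauchy v ?t"
    using val_cauchy_if_val_ge_steps val_ge_mono[OF _ val_ge_sqrt_one_plus_iter_step[OF k z]] k by simp
  then obtain L where L: "val_converges_to v ?t L"
    using complete unfolding val_complete_def by blast
  have near: "\<exists>N. \<forall>n\<ge>N. val_ge M (L - ?t n)" for M
    using val_converges_imp_val_ge[OF L, of M] by (metis minus_diff_eq val_ge_uminus)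
  then obtain N where "val_ge (k - 2) (L - ?t N)"
    by blast
  from val_ge_add[OF this val_ge_sqrt_one_plus_iter[OF k z, of N]] have L_small: "val_ge (k - 2) L"
    by simp
  have "2 * L + L\<^sup>2 - z = 0"
  proof (rule val_ge_all_imp_zero)
    fix M
    obtain N where N: "\<forall>n\<ge>N. val_ge M (L - ?t n)"
      using near by blast
    have "val_ge M (L - ?t (Suc N))"
      using N by simp
    from val_ge_mult[OF val_ge_of_int[of 2] this] have first: "val_ge M (2 * (L - ?t (Suc N)))"
      by (simp only: of_int_numeral add_0)
    have "val_ge (M + (k - 2)) ((L - ?t N) * (L + ?t N))"
      using val_ge_mult[OF _ val_ge_add[OF L_small val_ge_sqrt_one_plus_iter[OF k z]]] N by simp
    then have second: "val_ge M ((L - ?t N) * (L + ?t N))"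
      by (rule val_ge_mono[rotated]) (use k in simp)
    have "2 * L + L\<^sup>2 - z = 2 * (L - ?t (Suc N)) + (L - ?t N) * (L + ?t N)"
      unfolding sqrt_one_plus_iter_Suc using two_nonzero by (simp add: field_simps power2_eq_square)
    then show "val_ge M (2 * L + L\<^sup>2 - z)"
      using val_ge_add[OF first second] by (simp only:)
  qed
  then have "(1 + L)\<^sup>2 = 1 + z"
    by (simp add: power2_eq_square algebra_simps)
  with L_small show ?thesis
    by (intro exI[of _ "1 + L"]) simp
qed

lemma fourth_root_one_plus:
  assumes "val_ge 7 z"
  shows "\<exists>w. w ^ 4 = 1 + z"
proof -
  obtain w1 where w1: "w1\<^sup>2 = 1 + z" "val_ge 5 (w1 - 1)"
    using sqrt_one_plus[of 7 z] assms by auto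
  obtain w2 where "w2\<^sup>2 = 1 + (w1 - 1)"
    using sqrt_one_plus[of 5 "w1 - 1"] w1(2) by auto
  moreover have "w2 ^ 4 = (w2\<^sup>2)\<^sup>2"
    by (simp flip: power_mult)
  ultimately have "w2 ^ 4 = 1 + z"
    using w1(1) by simp
  then show ?thesis ..
qed

end

section \<open>Isotropy of the form over \<open>\<rat>\<^sub>2(\<surd>d)\<close>\<close>

locale Q2_sqrt_field = complete_dyadic_valuation +
  fixes s :: 'a and d :: int
  assumes residue_field_two: "\<forall>x. x \<noteq> 0 \<and> v x = 0 \<longrightarrow> x = 1 \<or> v (x - 1) > 0"
    and d_cases: "d \<in> {2, 10, -2, -10}"
    and s_square: "s\<^sup>2 = of_int d"
begin

lemma s_nonzero: "s \<noteq> 0" and val_s: "v s = 1"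
proof -
  have "d = 2 ^ 1 * (d div 2)" and "odd (d div 2)"
    using d_cases by auto
  then have "s\<^sup>2 \<noteq> 0" and "v (s\<^sup>2) = 2"
    unfolding s_square using val_of_int_two_power_times_odd[of "d div 2" 1] by simp_all
  then show "s \<noteq> 0" and "v s = 1"
    by (simp_all add: val_power)
qed

lemma unit_iff_val_ge_one: "x \<noteq> 0 \<and> v x = 0 \<longleftrightarrow> val_ge 1 (x - 1)"
proof
  assume "x \<noteq> 0 \<and> v x = 0"
  then show "val_ge 1 (x - 1)"
    using residue_field_two by (auto simp: val_ge_def)
next
  assume "val_ge 1 (x - 1)"
  then have "x - 1 = 0 \<or> v 1 < v (x - 1)"
    by (auto simp: val_ge_def)
  then show "x \<noteq> 0 \<and> v x = 0"
    using val_add_eq_left[of 1 "x - 1"] by simp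
qed

text \<open>The residue field is \<open>\<bbbF>\<^sub>2\<close>: two elements of the same valuation are congruent modulo
  the next power of \<open>s\<close>, so their sum has strictly larger valuation.\<close>
lemma val_ge_add_same_val:
  assumes "val_ge k p" and "q \<noteq> 0" and "v q = k"
  shows "val_ge (k + 1) p \<or> val_ge (k + 1) (p + q)"
proof (cases "val_ge (k + 1) p")
  case False
  with assms(1) have "p \<noteq> 0" and "v p = k"
    by (auto simp: val_ge_def)
  then have "val_ge 1 (p / q - 1)"
    using assms(2,3) by (simp add: unit_iff_val_ge_one[symmetric] val_divide)
  moreover have "val_ge 1 (2::'a)"
    using two_nonzero by (simp add: val_ge_iff val_two)
  ultimately have "val_ge 1 (p / q - 1 + 2)"
    by (rule val_ge_add)
  from val_ge_mult[OF _ this, of k q] have "val_ge (k + 1) (q * (p / q - 1 + 2))"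
    using assms(2,3) by (simp add: val_ge_iff)
  then show ?thesis
    using assms(2) by (simp add: algebra_simps)
qed simp

lemma approx_by_digits:
  assumes "val_ge 0 x"
  shows "\<exists>A B. val_ge (int n) (x - (of_int A + of_int B * s))"
proof (induction n)
  case 0
  show ?case
    using assms by (intro exI[of _ 0]) simp
next
  case (Suc n)
  then obtain A B where AB: "val_ge (int n) (x - (of_int A + of_int B * s))"
    by blast
  have "v (- (s ^ n)) = int n"
    using s_nonzero by (simp add: val_power val_s)
  then have "val_ge (int (Suc n)) (x - (of_int A + of_int B * s))
      \<or> val_ge (int (Suc n)) (x - (of_int A + of_int B * s) - s ^ n)"
    using val_ge_add_same_val[OF AB, of "- (s ^ n)"] s_nonzero by (simp add: add.commute)
  then show ?case
  proof
    assume next_digit: "val_ge (int (Suc n)) (x - (of_int A + of_int B * s) - s ^ n)"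
    have s_pow: "s ^ (2 * m) = of_int (d ^ m)" for m
      by (simp add: power_mult s_square)
    show ?case
    proof (cases "even n")
      case True
      then have "s ^ n = of_int (d ^ (n div 2))"
        using s_pow[of "n div 2"] by simp
      then show ?thesis
        using next_digit by (intro exI[of _ "A + d ^ (n div 2)"] exI[of _ B]) (simp add: algebra_simps)
    next
      case False
      then have "s ^ n = s ^ (2 * (n div 2) + 1)"
        by simp
      then have "s ^ n = of_int (d ^ (n div 2)) * s"
        using s_pow[of "n div 2"] by simp
      then show ?thesis
        using next_digit by (intro exI[of _ A] exI[of _ "B + d ^ (n div 2)"]) (simp add: algebra_simps)
    qed
  qed blast
qed

lemma unit_approx_by_digits:
  assumes "x \<noteq> 0" and "v x = 0" and "0 < n"
  shows "\<exists>A B. odd A \<and> val_ge (int n) (x - (of_int A + of_int B * s))"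
proof -
  obtain A B where AB: "val_ge (int n) (x - (of_int A + of_int B * s))"
    using approx_by_digits[of x n] assms(2) by (auto simp: val_ge_def)
  have "odd A"
  proof
    assume "even A"
    then have "val_ge 1 (of_int A :: 'a)"
      using val_ge_mono[OF _ val_ge_of_int_dvd[of 1 A]] by simp
    moreover have "val_ge 1 (of_int B * s)"
      using val_ge_mult[OF val_ge_of_int[of B], of 1 s] s_nonzero val_s by (simp add: val_ge_iff)
    moreover have "val_ge 1 (x - (of_int A + of_int B * s))"
      using val_ge_mono[OF _ AB] assms(3) by simp
    ultimately have "val_ge 1 ((x - (of_int A + of_int B * s)) + of_int A + of_int B * s)"
      by (intro val_ge_add)
    then show False
      using assms(1,2) by (simp add: val_ge_iff)
  qed
  with AB show ?thesis
    by blast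
qed

lemma val_two_approx_by_digits:
  assumes "c \<noteq> 0" and "v c = 2"
  shows "\<exists>C D. C mod 4 = 2 \<and> even D \<and> val_ge 4 (c - (of_int C + of_int D * s))"
proof -
  have "c / s\<^sup>2 \<noteq> 0" and "v (c / s\<^sup>2) = 0"
    using assms s_nonzero by (simp_all add: val_divide val_power val_s)
  then obtain A B where "odd A" and AB: "val_ge 2 (c / s\<^sup>2 - (of_int A + of_int B * s))"
    using unit_approx_by_digits[of "c / s\<^sup>2" 2] by auto
  have "c - (of_int (d * A) + of_int (d * B) * s) = s\<^sup>2 * (c / s\<^sup>2 - (of_int A + of_int B * s))"
    using s_nonzero by (simp add: right_diff_distrib distrib_left) (simp add: s_square mult_ac)
  moreover have "val_ge 2 (s\<^sup>2)"
    using s_nonzero by (simp add: val_ge_iff val_power val_s)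
  ultimately have "val_ge 4 (c - (of_int (d * A) + of_int (d * B) * s))"
    using val_ge_mult[OF _ AB] by fastforce
  moreover have "(d * A) mod 4 = 2" and "even (d * B)"
    using d_cases \<open>odd A\<close> by (auto, presburger+)
  ultimately show ?thesis
    by blast
qed

lemma val_one_plus_s_pow_four_minus_one:
  shows "(1 + s) ^ 4 - 1 \<noteq> 0" and "v ((1 + s) ^ 4 - 1) = 5"
proof -
  have "(1 + s) ^ 4 - 1 = 4 * s + 6 * s\<^sup>2 + 4 * s\<^sup>2 * s + s\<^sup>2 * s\<^sup>2"
    by (simp add: power2_eq_square power4_eq_xxxx algebra_simps)
  then have expand: "(1 + s) ^ 4 - 1 = of_int (2 ^ 2 * (1 + d)) * s + of_int (d * (6 + d))"
    by (simp add: s_square algebra_simps)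
  have "odd (1 + d)"
    using d_cases by auto
  then have "of_int (2 ^ 2 * (1 + d)) * s \<noteq> 0" and "v (of_int (2 ^ 2 * (1 + d)) * s) = 5"
    using val_of_int_two_power_times_odd[of "1 + d" 2] s_nonzero by (simp_all add: val_mult val_s)
  moreover have "val_ge 6 (of_int (d * (6 + d)) :: 'a)"
    using val_ge_of_int_dvd[of 3 "d * (6 + d)"] d_cases by auto
  ultimately show "(1 + s) ^ 4 - 1 \<noteq> 0" and "v ((1 + s) ^ 4 - 1) = 5"
    unfolding expand using val_add_eq_left by (auto simp: val_ge_def)
qed

lemma diag_quartic_digit_step:
  assumes "finite I" and "j \<in> I" and "val_ge k (diag_quartic c I x)"
    and "c j * (y ^ 4 - x j ^ 4) \<noteq> 0" and "v (c j * (y ^ 4 - x j ^ 4)) = k"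
  shows "val_ge (k + 1) (diag_quartic c I x) \<or> val_ge (k + 1) (diag_quartic c I (x(j := y)))"
  using val_ge_add_same_val[OF assms(3-5)] diag_quartic_update[OF assms(1,2), of c x y] by auto

lemma quartic_isotropic_hensel:
  assumes "finite I" and "j \<in> I" and F: "val_ge 7 (diag_quartic c I x)"
    and u: "c j * x j ^ 4 \<noteq> 0" "v (c j * x j ^ 4) = 0"
  shows "quartic_isotropic c I"
proof -
  define u where "u = c j * x j ^ 4"
  have "val_ge 7 (- diag_quartic c I x / u)"
    using F u by (cases "diag_quartic c I x = 0") (simp_all add: u_def val_ge_iff val_divide)
  then obtain r where r: "r ^ 4 = 1 + - diag_quartic c I x / u"
    using fourth_root_one_plus by blast
  have "diag_quartic c I (x(j := x j * r)) = diag_quartic c I x + u * (r ^ 4 - 1)"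
    unfolding diag_quartic_update[OF assms(1,2)] u_def by (simp add: algebra_simps)
  also have "\<dots> = 0"
    using u unfolding r u_def by simp
  finally have zero: "diag_quartic c I (x(j := x j * r)) = 0" .
  have "r \<noteq> 0"
  proof
    assume "r = 0"
    then have "- diag_quartic c I x / u = - 1"
      using r by (simp add: eq_neg_iff_add_eq_0 add.commute)
    then show False
      using \<open>val_ge 7 (- diag_quartic c I x / u)\<close> by (simp add: val_ge_iff)
  qed
  then have "(x(j := x j * r)) j \<noteq> 0"
    using u by simp
  with zero assms(2) show ?thesis
    unfolding quartic_isotropic_def by blast
qed

lemma exists_digits_of_coefficients:
  assumes "j \<notin> I" and units: "\<forall>i\<in>I. c i \<noteq> 0 \<and> v (c i) = 0" and "c j \<noteq> 0" and "v (c j) = 2"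
  obtains A B where "\<forall>i\<in>I. odd (A i)" and "A j mod 4 = 2" and "even (B j)"
    and "\<forall>i\<in>insert j I. val_ge 4 (c i - (of_int (A i) + of_int (B i) * s))"
proof -
  have "\<forall>i\<in>I. \<exists>A B. odd A \<and> val_ge 4 (c i - (of_int A + of_int B * s))"
    using units unit_approx_by_digits[of _ 4] by force
  then obtain A B where AB: "\<forall>i\<in>I. odd (A i) \<and> val_ge 4 (c i - (of_int (A i) + of_int (B i) * s))"
    by metis
  obtain C D where CD: "C mod 4 = 2" "even D" "val_ge 4 (c j - (of_int C + of_int D * s))"
    using val_two_approx_by_digits assms(3,4) by blast
  show ?thesis
    by (rule that[of "A(j := C)" "B(j := D)"]) (use AB CD assms(1) in auto)
qed

lemma exists_subset_sum_val_ge_four: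
  assumes "finite I" and "card I = 5" and "j \<notin> I"
    and "\<forall>i\<in>I. c i \<noteq> 0 \<and> v (c i) = 0" and "c j \<noteq> 0" and "v (c j) = 2"
  shows "\<exists>T\<subseteq>insert j I. (card (T \<inter> I) = 2 \<or> card (T \<inter> I) = 4) \<and> val_ge 4 (\<Sum>i\<in>T. c i)"
proof -
  obtain A B where AB: "\<forall>i\<in>I. odd (A i)" "A j mod 4 = 2" "even (B j)"
    and digits: "\<forall>i\<in>insert j I. val_ge 4 (c i - (of_int (A i) + of_int (B i) * s))"
    using exists_digits_of_coefficients[OF assms(3-6)] by blast
  obtain T where T: "T \<subseteq> insert j I" "card (T \<inter> I) = 2 \<or> card (T \<inter> I) = 4"
    "4 dvd (\<Sum>i\<in>T. A i)" "4 dvd (\<Sum>i\<in>T. B i)"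
    using exists_subset_two_sums_dvd_four[where A = A and B = B, OF assms(1-3) AB] by blast
  have digits_error: "val_ge 4 (\<Sum>i\<in>T. c i - (of_int (A i) + of_int (B i) * s))"
    using digits T(1) by (intro val_ge_sum) blast
  have "val_ge (2 * int 2) (of_int (\<Sum>i\<in>T. A i) :: 'a)"
    using T(3) by (intro val_ge_of_int_dvd) simp
  moreover have "val_ge (2 * int 2 + 0) (of_int (\<Sum>i\<in>T. B i) * s)"
    using T(4) val_s by (intro val_ge_mult val_ge_of_int_dvd) (simp_all add: val_ge_def)
  ultimately have "val_ge 4 ((\<Sum>i\<in>T. c i - (of_int (A i) + of_int (B i) * s))
      + (of_int (\<Sum>i\<in>T. A i) + of_int (\<Sum>i\<in>T. B i) * s))"
    using digits_error by (intro val_ge_add) simp_all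
  moreover have "(\<Sum>i\<in>T. c i) = (\<Sum>i\<in>T. c i - (of_int (A i) + of_int (B i) * s))
      + (of_int (\<Sum>i\<in>T. A i) + of_int (\<Sum>i\<in>T. B i) * s)"
    by (simp add: sum_subtractf sum.distrib sum_distrib_right)
  ultimately have "val_ge 4 (\<Sum>i\<in>T. c i)"
    by simp
  with T show ?thesis
    by blast
qed

text \<open>The digits at \<open>s\<^sup>4\<close>, \<open>s\<^sup>5\<close>, \<open>s\<^sup>6\<close> are cleared in turn: moving \<open>x k\<close> from \<open>0\<close> to \<open>s\<close> adds a
  term of valuation \<open>4\<close>, moving \<open>x i\<close> from \<open>1\<close> to \<open>1 + s\<close> one of valuation \<open>5\<close>, and moving
  \<open>x j\<close> from \<open>0\<close> to \<open>s\<close> one of valuation \<open>6\<close>.\<close>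
lemma diag_quartic_lift_to_val_ge_seven:
  assumes "finite I" and "k \<in> I" and "i \<in> I" and "j \<in> I" and "k \<noteq> i" and "k \<noteq> j" and "i \<noteq> j"
    and F: "val_ge 4 (diag_quartic c I x)" and x: "x k = 0" "x i = 1" "x j = 0"
    and c: "c k \<noteq> 0" "v (c k) = 0" "c i \<noteq> 0" "v (c i) = 0" "c j \<noteq> 0" "v (c j) = 2"
  shows "\<exists>x'. val_ge 7 (diag_quartic c I x') \<and> val_ge 1 (x' i - 1)"
proof -
  have "c k * (s ^ 4 - x k ^ 4) \<noteq> 0" and "v (c k * (s ^ 4 - x k ^ 4)) = 4"
    using x c s_nonzero by (simp_all add: val_mult val_power val_s)
  then obtain x1 where x1: "x1 \<in> {x, x(k := s)}" "val_ge 5 (diag_quartic c I x1)"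
    using diag_quartic_digit_step[OF assms(1,2) F] by fastforce
  have "c i * ((1 + s) ^ 4 - x1 i ^ 4) \<noteq> 0" and "v (c i * ((1 + s) ^ 4 - x1 i ^ 4)) = 5"
    using x1(1) x c val_one_plus_s_pow_four_minus_one \<open>k \<noteq> i\<close> by (auto simp: val_mult)
  then obtain x2 where x2: "x2 \<in> {x1, x1(i := 1 + s)}" "val_ge 6 (diag_quartic c I x2)"
    using diag_quartic_digit_step[OF assms(1,3) x1(2)] by fastforce
  have "c j * (s ^ 4 - x2 j ^ 4) \<noteq> 0" and "v (c j * (s ^ 4 - x2 j ^ 4)) = 6"
    using x1(1) x2(1) x c s_nonzero \<open>k \<noteq> j\<close> \<open>i \<noteq> j\<close> by (auto simp: val_mult val_power val_s)
  then obtain x3 where x3: "x3 \<in> {x2, x2(j := s)}" "val_ge 7 (diag_quartic c I x3)"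
    using diag_quartic_digit_step[OF assms(1,4) x2(2)] by fastforce
  have "x3 i = 1 \<or> x3 i = 1 + s"
    using x1(1) x2(1) x3(1) x \<open>k \<noteq> i\<close> \<open>i \<noteq> j\<close> by auto
  then have "val_ge 1 (x3 i - 1)"
    using s_nonzero by (auto simp: val_ge_iff val_s)
  with x3(2) show ?thesis
    by blast
qed

lemma quartic_isotropic_normalized:
  assumes "finite I" and "card I = 5" and "j5 \<notin> I" and "j6 \<notin> I" and "j5 \<noteq> j6"
    and units: "\<forall>i\<in>I. c i \<noteq> 0 \<and> v (c i) = 0"
    and "c j5 \<noteq> 0" and "v (c j5) = 2" and "c j6 \<noteq> 0" and "v (c j6) = 2"
  shows "quartic_isotropic c (insert j5 (insert j6 I))"
proof -
  define J where "J = insert j5 (insert j6 I)"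
  obtain T where T: "T \<subseteq> insert j5 I" "card (T \<inter> I) = 2 \<or> card (T \<inter> I) = 4" "val_ge 4 (\<Sum>i\<in>T. c i)"
    using exists_subset_sum_val_ge_four[OF assms(1-3) units assms(7,8)] by blast
  have "\<not> I \<subseteq> T"
    using T(2) assms(2) Int_absorb1[of I T] by auto
  then obtain k where k: "k \<in> I" "k \<notin> T"
    by blast
  have "T \<inter> I \<noteq> {}"
    using T(2) by auto
  then obtain i where i: "i \<in> I" "i \<in> T"
    by blast
  define x where "x l = (if l \<in> T then 1 else (0::'a))" for l
  have "diag_quartic c J x = (\<Sum>i\<in>T. c i)"
    unfolding diag_quartic_def
    by (rule sum.mono_neutral_cong_right) (use T(1) assms(1) in \<open>auto simp: J_def x_def\<close>)
  with T(3) have "val_ge 4 (diag_quartic c J x)"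
    by simp
  moreover have "j6 \<notin> T" and "k \<noteq> i" and "k \<noteq> j6" and "i \<noteq> j6"
    using T(1) k i assms(4,5) by auto
  moreover have "finite J" and "k \<in> J" and "i \<in> J" and "j6 \<in> J"
    using k(1) i(1) assms(1) by (simp_all add: J_def)
  ultimately obtain x' where x': "val_ge 7 (diag_quartic c J x')" "val_ge 1 (x' i - 1)"
    using diag_quartic_lift_to_val_ge_seven[of J k i j6 c x] k i units assms(9,10)
    by (auto simp: x_def)
  then have "x' i \<noteq> 0" and "v (x' i) = 0"
    using unit_iff_val_ge_one by blast+
  then have "c i * x' i ^ 4 \<noteq> 0" and "v (c i * x' i ^ 4) = 0"
    using units i(1) by (simp_all add: val_mult val_power)
  with \<open>finite J\<close> \<open>i \<in> J\<close> x'(1) show ?thesis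
    unfolding J_def by (rule quartic_isotropic_hensel)
qed

lemma quartic_isotropic_levels:
  assumes "finite I" and "card I = 5" and "j5 \<notin> I" and "j6 \<notin> I" and "j5 \<noteq> j6"
    and nonzero: "\<forall>i\<in>insert j5 (insert j6 I). c i \<noteq> 0"
    and level_I: "\<forall>i\<in>I. v (c i) mod 4 = L mod 4"
    and level_j: "v (c j5) mod 4 = (L + 2) mod 4" "v (c j6) mod 4 = (L + 2) mod 4"
  shows "quartic_isotropic c (insert j5 (insert j6 I))"
proof -
  define J where "J = insert j5 (insert j6 I)"
  define target where "target i = (if i \<in> I then 0 else 2 :: int)" for i
  obtain \<mu> where \<mu>: "\<mu> \<noteq> 0" "v \<mu> = - L"
    using exists_val_eq by blast
  have "\<forall>i\<in>J. \<exists>r. r \<noteq> 0 \<and> v (r ^ 4 * (\<mu> * c i)) = target i"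
  proof
    fix i
    assume "i \<in> J"
    then have "\<mu> * c i \<noteq> 0" and "v (\<mu> * c i) = v (c i) - L"
      using \<mu> nonzero by (auto simp: J_def val_mult)
    moreover have "target i mod int 4 = (v (c i) - L) mod int 4"
    proof (cases "i \<in> I")
      case True
      then have "v (c i) mod 4 = L mod 4"
        using level_I by blast
      with True show ?thesis
        unfolding target_def by simp presburger
    next
      case False
      then have "v (c i) mod 4 = (L + 2) mod 4"
        using \<open>i \<in> J\<close> level_j unfolding J_def by blast
      with False show ?thesis
        unfolding target_def by simp presburger
    qed
    ultimately show "\<exists>r. r \<noteq> 0 \<and> v (r ^ 4 * (\<mu> * c i)) = target i"
      by (intro exists_val_power_times_eq) simp_all
  qed
  then obtain r where r: "\<forall>i\<in>J. r i \<noteq> 0 \<and> v (r i ^ 4 * (\<mu> * c i)) = target i"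
    by metis
  have normalized: "quartic_isotropic (\<lambda>i. \<mu> * r i ^ 4 * c i) J"
    unfolding J_def
  proof (rule quartic_isotropic_normalized)
    show "\<forall>i\<in>I. \<mu> * r i ^ 4 * c i \<noteq> 0 \<and> v (\<mu> * r i ^ 4 * c i) = 0"
      using r \<mu> nonzero by (auto simp: J_def target_def mult_ac)
  qed (use assms r \<mu> nonzero in \<open>auto simp: J_def target_def mult_ac\<close>)
  have "\<forall>i\<in>J. r i \<noteq> 0"
    using r by blast
  from quartic_isotropic_rescale[OF \<mu>(1) this normalized] show ?thesis
    by (simp add: J_def)
qed

lemma quartic_isotropic_of_type_5_0_2_0:
  assumes nonzero: "\<forall>k<n. a k \<noteq> 0" and type: "form_of_type v n a ((\<lambda>_. 0)(0 := 5, 2 := 2))"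
  shows "quartic_isotropic a {..<n}"
proof -
  obtain L where L: "\<forall>i<4. ((\<lambda>_. 0)(0 := 5, 2 := 2)) i \<le> card {k. k < n \<and> level v (a k) = (int i + L) mod 4}"
    using type unfolding form_of_type_def by blast
  define M0 where "M0 = {k. k < n \<and> v (a k) mod 4 = L mod 4}"
  define M2 where "M2 = {k. k < n \<and> v (a k) mod 4 = (L + 2) mod 4}"
  have "5 \<le> card M0" and "2 \<le> card M2"
    using L[rule_format, of 0] L[rule_format, of 2] by (simp_all add: M0_def M2_def level_def add.commute)
  then obtain I J where I: "I \<subseteq> M0" "card I = 5" and "J \<subseteq> M2" "card J = 2"
    using obtain_subset_with_card_n by metis
  then obtain j5 j6 where j: "j5 \<in> M2" "j6 \<in> M2" "j5 \<noteq> j6"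
    unfolding card_2_iff by blast
  have "L mod 4 \<noteq> (L + 2) mod 4"
    by presburger
  then have "M0 \<inter> M2 = {}"
    unfolding M0_def M2_def by auto
  then have "j5 \<notin> I" and "j6 \<notin> I"
    using I(1) j by auto
  moreover have "finite I"
    using I(1) by (rule finite_subset) (simp add: M0_def)
  moreover have "\<forall>i\<in>insert j5 (insert j6 I). a i \<noteq> 0"
    using I(1) j nonzero by (auto simp: M0_def M2_def)
  moreover have "\<forall>i\<in>I. v (a i) mod 4 = L mod 4"
    using I(1) by (auto simp: M0_def)
  moreover have "v (a j5) mod 4 = (L + 2) mod 4" and "v (a j6) mod 4 = (L + 2) mod 4"
    using j by (simp_all add: M2_def)
  ultimately have "quartic_isotropic a (insert j5 (insert j6 I))"
    using I(2) j(3) by (intro quartic_isotropic_levels)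
  moreover have "insert j5 (insert j6 I) \<subseteq> {..<n}"
    using I(1) j by (auto simp: M0_def M2_def)
  ultimately show ?thesis
    by (rule quartic_isotropic_subset) simp
qed

end

theorem mainTheorem11:
  fixes v :: "'a::field \<Rightarrow> int" and a :: "nat \<Rightarrow> 'a"
  assumes "is_Q2_sqrt_field v"
    and "\<forall>k<11. a k \<noteq> 0"
    and "form_of_type v 11 a ((\<lambda>_. 0)(0 := 5, 2 := 3))"
  shows "\<exists>x :: nat \<Rightarrow> 'a. (\<exists>k<11. x k \<noteq> 0) \<and> (\<Sum>k<11. a k * x k ^ 4) = 0"
proof -
  obtain d s where "d \<in> {2, 10, -2, -10}" and "s\<^sup>2 = (of_int d :: 'a)"
    using assms(1) unfolding is_Q2_sqrt_field_def by blast
  then interpret Q2_sqrt_field v s d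
    using assms(1) unfolding is_Q2_sqrt_field_def by unfold_locales auto
  have "form_of_type v 11 a ((\<lambda>_. 0)(0 := 5, 2 := 2))"
    using assms(3) by (rule form_of_type_mono) simp
  with assms(2) have "quartic_isotropic a {..<11}"
    by (rule quartic_isotropic_of_type_5_0_2_0)
  then show ?thesis
    unfolding quartic_isotropic_def diag_quartic_def by auto
qed

end
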